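(* There is an absolute constant $c>0$ such that an $L$-layer log-linear attention model with $H$ heads, dimension $d$ and precision $p$ cannot solve the function evaluation task $\mathsf{Eva}$ on $[n]$ whenever $LHd^2p<cn$. On the other hand, a single-layer full attention Transformer solves $\mathsf{Eva}$ with $Hdp=O(\mathrm{poly}\log n)$. The same lower bound holds for log-linear attention with chain-of-thought.
   Context: Function evaluation $\mathsf{Eva}(f,x)$: the input is a function $f:[n]\to[n]$, given as $n$ tokens encoding $f(1),\dots,f(n)$, followed by one token encoding $x\in[n]$. The required output is $f(x)$. Log-linear attention (layer $\ell$, head $h$): the output at position $i$ is $y^{(\ell,h)}_i=\sum_{r=0}^{R-1}\lambda^{(r,\ell,h)}_iS^{(r,\ell,h)}_iQx^{(\ell-1,h)}_i$, where $R=\lceil\log_2 i+1\rceil+1$. The weights $\lambda^{(r,\ell,h)}_i$ depend only on $x^{(\ell-1,h)}_i$, and the hidden states $S^{(r,\ell,h)}_i\in\mathbb{R}^{d\times d}$ (with $p$-bit entries) are updated by $S^{(r,\ell,h)}_i=f^{(r,\ell,h)}\big((S^{(r',\ell,h)}_{i-1})_{r'\in[0,r-1]},x^{(\ell-1,h)}_i\big)$ for fixed functions $f^{(r,\ell,h)}$. Heads are concatenated, and layers are interleaved with arbitrary position-wise MLP maps. Full attention uses softmax weights $\alpha_{i,j}\propto\exp(\langle Qx_i,Kx_j\rangle)$ over $j\le i$ and output $\sum_{j\le i}\alpha_{i,j}Vx_j$. With chain-of-thought, the model autoregressively generates additional tokens after the input (each appended as a new position), and the answer is read from them. *)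

theory Defs
  imports Complex_Main
begin

(* Vectors in R^d and matrices in R^{d x d} are represented as functions on
   indices, always masked to the coordinates a < d (resp. a, b < d).
   A "stream" at a position is the tuple of per-head vectors x^{(l,h)}_i,
   masked to heads h < H and coordinates a < d. Positions are 1-indexed. *)

type_synonym vec = "nat \<Rightarrow> real"
type_synonym mat = "nat \<Rightarrow> nat \<Rightarrow> real"
type_synonym strm = "nat \<Rightarrow> vec"

definition mvec :: "nat \<Rightarrow> mat \<Rightarrow> vec \<Rightarrow> vec" where
  "mvec d A v = (\<lambda>a. if a < d then (\<Sum>b<d. A a b * v b) else 0)"

definition mmask :: "nat \<Rightarrow> mat \<Rightarrow> mat" where
  "mmask d A = (\<lambda>a b. if a < d \<and> b < d then A a b else 0)"

definition smask :: "nat \<Rightarrow> nat \<Rightarrow> strm \<Rightarrow> strm" where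
  "smask H d X = (\<lambda>h a. if h < H \<and> a < d then X h a else 0)"

definition nstates :: "nat \<Rightarrow> nat" where
  "nstates i = nat \<lceil>log 2 (real i) + 1\<rceil> + 1"

definition is_fun :: "nat \<Rightarrow> (nat \<Rightarrow> nat) \<Rightarrow> bool" where
  "is_fun n f \<longleftrightarrow> (\<forall>i\<in>{1..n}. f i \<in> {1..n})"

definition eva_tokens :: "nat \<Rightarrow> (nat \<Rightarrow> nat) \<Rightarrow> nat \<Rightarrow> nat \<Rightarrow> nat" where
  "eva_tokens n f x = (\<lambda>i. if 1 \<le> i \<and> i \<le> n then f i else if i = n + 1 then x else 0)"

record loglin_model =
  ll_emb :: "nat \<Rightarrow> nat \<Rightarrow> strm"                       (* token, position *)
  ll_lam :: "nat \<Rightarrow> nat \<Rightarrow> nat \<Rightarrow> vec \<Rightarrow> real"             (* r, layer, head, x_i *)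
  ll_upd :: "nat \<Rightarrow> nat \<Rightarrow> nat \<Rightarrow> (nat \<Rightarrow> mat) \<Rightarrow> vec \<Rightarrow> mat"
  ll_Q   :: "nat \<Rightarrow> nat \<Rightarrow> mat"                        (* layer, head *)
  ll_mlp :: "nat \<Rightarrow> strm \<Rightarrow> strm \<Rightarrow> strm"               (* layer, head outputs, previous stream *)
  ll_out :: "strm \<Rightarrow> nat"

(* hidden states S^(r)_i of one head; S_0 = 0 (empty prefix);
   f^(r) only sees (S^(r')_{i-1})_{r' < r} and x_i *)
fun ll_state :: "nat \<Rightarrow> (nat \<Rightarrow> (nat \<Rightarrow> mat) \<Rightarrow> vec \<Rightarrow> mat) \<Rightarrow> (nat \<Rightarrow> vec) \<Rightarrow> nat \<Rightarrow> nat \<Rightarrow> mat" where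
  "ll_state d F xs 0 = (\<lambda>r a b. 0)"
| "ll_state d F xs (Suc i) =
     (\<lambda>r. mmask d (F r (\<lambda>r'. if r' < r then ll_state d F xs i r' else (\<lambda>a b. 0)) (xs (Suc i))))"

definition ll_head :: "nat \<Rightarrow> (nat \<Rightarrow> vec \<Rightarrow> real) \<Rightarrow> (nat \<Rightarrow> (nat \<Rightarrow> mat) \<Rightarrow> vec \<Rightarrow> mat)
    \<Rightarrow> mat \<Rightarrow> (nat \<Rightarrow> vec) \<Rightarrow> nat \<Rightarrow> vec" where
  "ll_head d lam F Q xs i =
     (\<lambda>a. \<Sum>r<nstates i. lam r (xs i) * mvec d (ll_state d F xs i r) (mvec d Q (xs i)) a)"

fun ll_stream :: "nat \<Rightarrow> nat \<Rightarrow> loglin_model \<Rightarrow> (nat \<Rightarrow> nat) \<Rightarrow> nat \<Rightarrow> nat \<Rightarrow> strm" where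
  "ll_stream H d M toks 0 = (\<lambda>i. smask H d (ll_emb M (toks i) i))"
| "ll_stream H d M toks (Suc l) =
     (let X = ll_stream H d M toks l in
      (\<lambda>i. smask H d (ll_mlp M l
              (\<lambda>h. if h < H then ll_head d (\<lambda>r. ll_lam M r l h) (\<lambda>r. ll_upd M r l h) (ll_Q M l h)
                                        (\<lambda>j. X j h) i
                   else (\<lambda>a. 0))
              (X i))))"

definition ll_run :: "nat \<Rightarrow> nat \<Rightarrow> nat \<Rightarrow> loglin_model \<Rightarrow> (nat \<Rightarrow> nat) \<Rightarrow> nat \<Rightarrow> nat" where
  "ll_run L H d M toks i = ll_out M (ll_stream H d M toks L i)"

definition ll_precision :: "nat \<Rightarrow> nat \<Rightarrow> nat \<Rightarrow> nat \<Rightarrow> loglin_model \<Rightarrow> bool" where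
  "ll_precision L H d p M \<longleftrightarrow>
     (\<exists>P :: real set. finite P \<and> card P \<le> 2 ^ p \<and>
        (\<forall>r l h S v a b. l < L \<and> h < H \<and> a < d \<and> b < d \<longrightarrow> ll_upd M r l h S v a b \<in> P))"

definition ll_solves :: "nat \<Rightarrow> nat \<Rightarrow> nat \<Rightarrow> nat \<Rightarrow> nat \<Rightarrow> loglin_model \<Rightarrow> bool" where
  "ll_solves n L H d p M \<longleftrightarrow> ll_precision L H d p M \<and>
     (\<forall>f x. is_fun n f \<and> x \<in> {1..n} \<longrightarrow> ll_run L H d M (eva_tokens n f x) (n + 1) = f x)"

(* chain of thought: token sequence after k generated tokens (input of length m) *)
fun ll_cot :: "nat \<Rightarrow> nat \<Rightarrow> nat \<Rightarrow> loglin_model \<Rightarrow> (nat \<Rightarrow> nat) \<Rightarrow> nat \<Rightarrow> nat \<Rightarrow> nat \<Rightarrow> nat" where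
  "ll_cot L H d M t0 m 0 = t0"
| "ll_cot L H d M t0 m (Suc k) =
     (let t = ll_cot L H d M t0 m k in t(m + Suc k := ll_run L H d M t (m + k)))"

definition ll_cot_tokens :: "nat \<Rightarrow> nat \<Rightarrow> nat \<Rightarrow> loglin_model \<Rightarrow> nat \<Rightarrow> nat \<Rightarrow> (nat \<Rightarrow> nat) \<Rightarrow> nat \<Rightarrow> nat list" where
  "ll_cot_tokens L H d M n T f x =
     map (ll_cot L H d M (eva_tokens n f x) (n + 1) T) [n + 2..<n + 2 + T]"

definition ll_solves_cot :: "nat \<Rightarrow> nat \<Rightarrow> nat \<Rightarrow> nat \<Rightarrow> nat \<Rightarrow> loglin_model \<Rightarrow> bool" where
  "ll_solves_cot n L H d p M \<longleftrightarrow> ll_precision L H d p M \<and>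
     (\<exists>T (dec :: nat list \<Rightarrow> nat). \<forall>f x. is_fun n f \<and> x \<in> {1..n} \<longrightarrow>
         dec (ll_cot_tokens L H d M n T f x) = f x)"

record fullatt_model =
  fa_emb :: "nat \<Rightarrow> nat \<Rightarrow> strm"
  fa_Q   :: "nat \<Rightarrow> nat \<Rightarrow> mat"
  fa_K   :: "nat \<Rightarrow> nat \<Rightarrow> mat"
  fa_V   :: "nat \<Rightarrow> nat \<Rightarrow> mat"
  fa_mlp :: "nat \<Rightarrow> strm \<Rightarrow> strm \<Rightarrow> strm"
  fa_out :: "strm \<Rightarrow> nat"

definition rnd :: "real set \<Rightarrow> real \<Rightarrow> real" where
  "rnd P t = (SOME q. q \<in> P \<and> (\<forall>q'\<in>P. \<bar>t - q\<bar> \<le> \<bar>t - q'\<bar>))"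

definition fa_head :: "real set \<Rightarrow> nat \<Rightarrow> mat \<Rightarrow> mat \<Rightarrow> mat \<Rightarrow> (nat \<Rightarrow> vec) \<Rightarrow> nat \<Rightarrow> vec" where
  "fa_head P d Q K V xs i =
     (let q = mvec d Q (xs i);
          s = (\<lambda>j. \<Sum>a<d. q a * mvec d K (xs j) a);
          Z = (\<Sum>j\<in>{1..i}. exp (s j))
      in (\<lambda>a. if a < d then rnd P (\<Sum>j\<in>{1..i}. exp (s j) / Z * mvec d V (xs j) a) else 0))"

fun fa_stream :: "real set \<Rightarrow> nat \<Rightarrow> nat \<Rightarrow> fullatt_model \<Rightarrow> (nat \<Rightarrow> nat) \<Rightarrow> nat \<Rightarrow> nat \<Rightarrow> strm" where
  "fa_stream P H d M toks 0 = (\<lambda>i. smask H d (fa_emb M (toks i) i))"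
| "fa_stream P H d M toks (Suc l) =
     (let X = fa_stream P H d M toks l in
      (\<lambda>i. smask H d (fa_mlp M l
              (\<lambda>h. if h < H then fa_head P d (fa_Q M l h) (fa_K M l h) (fa_V M l h) (\<lambda>j. X j h) i
                   else (\<lambda>a. 0))
              (X i))))"

definition fa_run :: "real set \<Rightarrow> nat \<Rightarrow> nat \<Rightarrow> nat \<Rightarrow> fullatt_model \<Rightarrow> (nat \<Rightarrow> nat) \<Rightarrow> nat \<Rightarrow> nat" where
  "fa_run P L H d M toks i = fa_out M (fa_stream P H d M toks L i)"

definition fa_precision :: "real set \<Rightarrow> nat \<Rightarrow> nat \<Rightarrow> nat \<Rightarrow> nat \<Rightarrow> fullatt_model \<Rightarrow> bool" where
  "fa_precision P L H d p M \<longleftrightarrow> finite P \<and> P \<noteq> {} \<and> card P \<le> 2 ^ p \<and>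
     (\<forall>t i h a. h < H \<and> a < d \<longrightarrow> fa_emb M t i h a \<in> P) \<and>
     (\<forall>l h a b. l < L \<and> h < H \<and> a < d \<and> b < d \<longrightarrow>
         fa_Q M l h a b \<in> P \<and> fa_K M l h a b \<in> P \<and> fa_V M l h a b \<in> P) \<and>
     (\<forall>l Y X h a. l < L \<and> h < H \<and> a < d \<longrightarrow> fa_mlp M l Y X h a \<in> P)"

definition fa_solves :: "nat \<Rightarrow> nat \<Rightarrow> nat \<Rightarrow> nat \<Rightarrow> nat \<Rightarrow> real set \<Rightarrow> fullatt_model \<Rightarrow> bool" where
  "fa_solves n L H d p P M \<longleftrightarrow> fa_precision P L H d p M \<and>
     (\<forall>f x. is_fun n f \<and> x \<in> {1..n} \<longrightarrow> fa_run P L H d M (eva_tokens n f x) (n + 1) = f x)"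

end

theory Submission
  imports Defs "HOL-Library.FuncSet" "HOL-Library.Log_Nat"
begin

text \<open>
The hidden states of a log-linear layer are updated by a recurrence whose r-th
state only reads the previous states of lower index, and the number of states grows by at most
one per position. Hence everything the model computes after position n, including
chain-of-thought tokens, depends only on the later tokens and on a checkpoint of
L H d^2 nstates(n + 1) hidden-state entries at position n, each taking at most 2^p values.
For Eva the later tokens only carry the query x, so the checkpoint must determine the whole
function f, of which there are n^n. Since nstates(n + 1) = O(log n), this forces
n log n <= p L H d^2 (log n + 4), which fails when 8 L H d^2 p < n.

Embed position j <= n as (j, j^2, f j, 0) and the query position as (x, 0, 0, 1),
and choose query and key matrices giving attention score beta (x^2 - (x - j)^2) to position
j <= n and at most beta (x^2 - 1) to the query position itself. With beta = 2 (n + 1)^2 the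
softmax average of the values f j is within 1/2 of f x, so rounding to the integers recovers f x.
All numbers involved are integers of size O(n^2), i.e. O(log n) bits.
\<close>

section \<open>Causality and the checkpoint of a log-linear model\<close>

lemma ll_state_cong_prefix:
  assumes "\<And>j. j \<le> i \<Longrightarrow> xs j = ys j"
  shows "ll_state d F xs i = ll_state d F ys i"
  using assms
proof (induction i)
  case (Suc i)
  then have "ll_state d F xs i = ll_state d F ys i" and "xs (Suc i) = ys (Suc i)"
    by simp_all
  then show ?case by (simp only: ll_state.simps)
qed simp

lemma ll_stream_cong_prefix:
  assumes "\<And>j. j \<le> i \<Longrightarrow> toks j = toks' j"
  shows "ll_stream H d M toks l i = ll_stream H d M toks' l i"
  using assms
proof (induction l arbitrary: i)
  case (Suc l)
  have prev: "ll_stream H d M toks l j = ll_stream H d M toks' l j" if "j \<le> i" for j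
    using Suc that by simp
  have "ll_head d lam F Q (\<lambda>j. ll_stream H d M toks l j h) i
      = ll_head d lam F Q (\<lambda>j. ll_stream H d M toks' l j h) i" for lam F Q h
  proof -
    have "ll_state d F (\<lambda>j. ll_stream H d M toks l j h) i
        = ll_state d F (\<lambda>j. ll_stream H d M toks' l j h) i"
      by (rule ll_state_cong_prefix) (simp add: prev)
    then show ?thesis unfolding ll_head_def by (simp add: prev)
  qed
  then show ?case by (simp add: Let_def prev cong: if_cong)
qed simp

lemma ll_state_cong_suffix:
  assumes "\<And>j. j > n \<Longrightarrow> xs j = ys j"
    and "\<And>r. r < K \<Longrightarrow> ll_state d F xs n r = ll_state d F ys n r"
    and "r < K + k"
  shows "ll_state d F xs (n + k) r = ll_state d F ys (n + k) r"
  using assms(3)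
proof (induction k arbitrary: r)
  case 0
  then show ?case using assms(2) by simp
next
  case (Suc k)
  then have "(\<lambda>r'. if r' < r then ll_state d F xs (n + k) r' else (\<lambda>a b. 0))
      = (\<lambda>r'. if r' < r then ll_state d F ys (n + k) r' else (\<lambda>a b. 0))"
    by auto
  moreover have "xs (Suc (n + k)) = ys (Suc (n + k))"
    using assms(1) by simp
  ultimately show ?case by simp
qed

lemma ll_state_Suc_masked: "\<not> (a < d \<and> b < d) \<Longrightarrow> ll_state d F xs (Suc i) r a b = 0"
  by (auto simp add: mmask_def)

lemma log2_Suc_le: "m \<ge> 1 \<Longrightarrow> log 2 (real (Suc m)) \<le> log 2 (real m) + 1"
proof -
  assume "m \<ge> 1"
  then have "log 2 (real (Suc m)) \<le> log 2 (2 * real m)"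
    by simp
  also have "\<dots> = log 2 (real m) + 1"
    using \<open>m \<ge> 1\<close> by (simp add: log_mult)
  finally show ?thesis .
qed

lemma nstates_Suc_le:
  assumes "m \<ge> 1"
  shows "nstates (Suc m) \<le> Suc (nstates m)"
proof -
  have "\<lceil>log 2 (real (Suc m)) + 1\<rceil> \<le> \<lceil>log 2 (real m) + 1\<rceil> + 1"
    using log2_Suc_le[OF assms] by (metis ceiling_add_one ceiling_mono add_le_cancel_right)
  moreover have "log 2 (real m) \<ge> 0"
    using assms by simp
  ultimately show ?thesis
    unfolding nstates_def by linarith
qed

lemma nstates_add_le: "m \<ge> 1 \<Longrightarrow> nstates (m + k) \<le> nstates m + k"
proof (induction k)
  case (Suc k)
  then show ?case using nstates_Suc_le[of "m + k"] by simp
qed simp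

(* The hidden states S^(r, l+1, h)_i of the paper: the layer with index l reads the stream
   after l layers. *)
definition ll_head_state ::
    "nat \<Rightarrow> nat \<Rightarrow> loglin_model \<Rightarrow> (nat \<Rightarrow> nat) \<Rightarrow> nat \<Rightarrow> nat \<Rightarrow> nat \<Rightarrow> nat \<Rightarrow> mat"
  where "ll_head_state H d M toks l h i =
    ll_state d (\<lambda>r. ll_upd M r l h) (\<lambda>j. ll_stream H d M toks l j h) i"

lemma ll_stream_Suc_head_state:
  "ll_stream H d M toks (Suc l) i =
     smask H d (ll_mlp M l
       (\<lambda>h. if h < H
             then (\<lambda>a. \<Sum>r<nstates i. ll_lam M r l h (ll_stream H d M toks l i h) *
                     mvec d (ll_head_state H d M toks l h i r)
                       (mvec d (ll_Q M l h) (ll_stream H d M toks l i h)) a)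
             else (\<lambda>a. 0))
       (ll_stream H d M toks l i))"
  by (simp add: Let_def ll_head_def ll_head_state_def cong: if_cong)

(* Positions after n read only the states r < nstates (n + 1) at position n: the update of
   state r reads the previous states r' < r only, and nstates grows by at most one per position. *)
definition checkpoint_index :: "nat \<Rightarrow> nat \<Rightarrow> nat \<Rightarrow> nat \<Rightarrow> (nat \<times> nat \<times> nat \<times> nat \<times> nat) set"
  where "checkpoint_index L H d n =
    {..<L} \<times> {..<H} \<times> {..<nstates (n + 1)} \<times> {..<d} \<times> {..<d}"

lemma finite_checkpoint_index: "finite (checkpoint_index L H d n)"
  by (simp add: checkpoint_index_def)

lemma card_checkpoint_index: "card (checkpoint_index L H d n) = L * H * nstates (n + 1) * d * d"
  by (simp add: checkpoint_index_def card_cartesian_product)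

definition ll_checkpoint :: "nat \<Rightarrow> nat \<Rightarrow> nat \<Rightarrow> loglin_model \<Rightarrow> (nat \<Rightarrow> nat) \<Rightarrow> nat
    \<Rightarrow> nat \<times> nat \<times> nat \<times> nat \<times> nat \<Rightarrow> real"
  where "ll_checkpoint L H d M toks n =
    restrict (\<lambda>(l, h, r, a, b). ll_head_state H d M toks l h n r a b) (checkpoint_index L H d n)"

lemma ll_checkpoint_cong_prefix:
  assumes "\<And>j. j \<le> n \<Longrightarrow> toks j = toks' j"
  shows "ll_checkpoint L H d M toks n = ll_checkpoint L H d M toks' n"
proof -
  have "ll_stream H d M toks l j = ll_stream H d M toks' l j" if "j \<le> n" for l j
    using assms that by (intro ll_stream_cong_prefix) simp
  then have "ll_head_state H d M toks l h n = ll_head_state H d M toks' l h n" for l h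
    unfolding ll_head_state_def by (intro ll_state_cong_prefix) simp
  then show ?thesis
    unfolding ll_checkpoint_def by simp
qed

lemma ll_head_state_eq_if_checkpoint_eq:
  assumes "n \<ge> 1" and "ll_checkpoint L H d M toks n = ll_checkpoint L H d M toks' n"
    and "l < L" "h < H" "r < nstates (n + 1)"
  shows "ll_head_state H d M toks l h n r = ll_head_state H d M toks' l h n r"
proof (intro ext)
  fix a b
  show "ll_head_state H d M toks l h n r a b = ll_head_state H d M toks' l h n r a b"
  proof (cases "a < d \<and> b < d")
    case True
    then have "(l, h, r, a, b) \<in> checkpoint_index L H d n"
      using assms unfolding checkpoint_index_def by simp
    then show ?thesis
      using fun_cong[OF assms(2), of "(l, h, r, a, b)"] unfolding ll_checkpoint_def by simp
  next
    case False
    obtain m where "n = Suc m" using assms(1) by (cases n) auto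
    then show ?thesis
      unfolding ll_head_state_def by (simp only: ll_state_Suc_masked[OF False])
  qed
qed

lemma ll_head_state_eq_after_checkpoint:
  assumes "n \<ge> 1" and "ll_checkpoint L H d M toks n = ll_checkpoint L H d M toks' n"
    and "\<And>j. j > n \<Longrightarrow> ll_stream H d M toks l j = ll_stream H d M toks' l j"
    and "l < L" "h < H" "i > n" "r < nstates i"
  shows "ll_head_state H d M toks l h i r = ll_head_state H d M toks' l h i r"
proof -
  have "nstates i = nstates (n + 1 + (i - n - 1))"
    using \<open>i > n\<close> by simp
  also have "\<dots> \<le> nstates (n + 1) + (i - n - 1)"
    by (rule nstates_add_le) simp
  finally have "r < nstates (n + 1) + (i - n)"
    using assms(6,7) by simp
  moreover have "ll_head_state H d M toks l h n r' = ll_head_state H d M toks' l h n r'"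
    if "r' < nstates (n + 1)" for r'
    using ll_head_state_eq_if_checkpoint_eq assms(1,2,4,5) that by blast
  ultimately have "ll_head_state H d M toks l h (n + (i - n)) r
      = ll_head_state H d M toks' l h (n + (i - n)) r"
    unfolding ll_head_state_def by (intro ll_state_cong_suffix) (auto simp: assms(3))
  then show ?thesis
    using assms(6) by simp
qed

lemma ll_stream_eq_after_checkpoint:
  assumes "n \<ge> 1" and "ll_checkpoint L H d M toks n = ll_checkpoint L H d M toks' n"
    and "\<And>j. j > n \<Longrightarrow> toks j = toks' j"
    and "l \<le> L" "i > n"
  shows "ll_stream H d M toks l i = ll_stream H d M toks' l i"
  using assms(4,5)
proof (induction l arbitrary: i)
  case 0
  then show ?case using assms(3) by simp
next
  case (Suc l)
  then have "\<And>j. j > n \<Longrightarrow> ll_stream H d M toks l j = ll_stream H d M toks' l j"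
    by simp
  with Suc.prems show ?case
    using ll_head_state_eq_after_checkpoint[OF assms(1,2)]
    by (simp only: ll_stream_Suc_head_state)
      (intro arg_cong[where f = "smask H d"] arg_cong2[where f = "ll_mlp M l"] ext; simp)
qed

lemma ll_cot_prefix: "j \<le> m \<Longrightarrow> ll_cot L H d M toks m k j = toks j"
  by (induction k) (auto simp: Let_def)

lemma ll_cot_eq_after_checkpoint:
  assumes "n \<ge> 1" and "ll_checkpoint L H d M toks n = ll_checkpoint L H d M toks' n"
    and "\<And>j. j > n \<Longrightarrow> toks j = toks' j" and "i > n"
  shows "ll_cot L H d M toks (n + 1) k i = ll_cot L H d M toks' (n + 1) k i"
  using assms(4)
proof (induction k arbitrary: i)
  case 0
  then show ?case using assms(3) by simp
next
  case (Suc k)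
  let ?t = "ll_cot L H d M toks (n + 1) k" and ?t' = "ll_cot L H d M toks' (n + 1) k"
  have "ll_checkpoint L H d M ?t n = ll_checkpoint L H d M toks n"
    and "ll_checkpoint L H d M ?t' n = ll_checkpoint L H d M toks' n"
    by (rule ll_checkpoint_cong_prefix, simp add: ll_cot_prefix)+
  with assms(2) have "ll_checkpoint L H d M ?t n = ll_checkpoint L H d M ?t' n"
    by simp
  then have "ll_stream H d M ?t L (n + 1 + k) = ll_stream H d M ?t' L (n + 1 + k)"
    using Suc.IH by (intro ll_stream_eq_after_checkpoint[OF assms(1)]) auto
  then show ?case
    using Suc by (simp add: Let_def ll_run_def)
qed

lemma ll_checkpoint_in_PiE:
  assumes "n \<ge> 1"
    and P: "\<And>r l h S v a b. l < L \<Longrightarrow> h < H \<Longrightarrow> a < d \<Longrightarrow> b < d \<Longrightarrow>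
      ll_upd M r l h S v a b \<in> P"
  shows "ll_checkpoint L H d M toks n \<in> checkpoint_index L H d n \<rightarrow>\<^sub>E P"
  unfolding ll_checkpoint_def
proof (rule restrict_PiE_iff[THEN iffD2], intro ballI)
  fix z
  assume "z \<in> checkpoint_index L H d n"
  then obtain l h r a b where z: "z = (l, h, r, a, b)" "l < L" "h < H" "a < d" "b < d"
    unfolding checkpoint_index_def by auto
  obtain m where "n = Suc m"
    using assms(1) by (cases n) auto
  then show "(case z of (l, h, r, a, b) \<Rightarrow> ll_head_state H d M toks l h n r a b) \<in> P"
    using z P[OF z(2-5)] by (simp add: ll_head_state_def mmask_def)
qed

section \<open>The lower bound by counting\<close>

lemma eva_count_le_checkpoints:
  assumes "n \<ge> 1" and "ll_precision L H d p M"
    and "inj_on (\<lambda>f. ll_checkpoint L H d M (eva_tokens n f 1) n) ({1..n} \<rightarrow>\<^sub>E {1..n})"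
  shows "n ^ n \<le> 2 ^ (p * (L * H * nstates (n + 1) * d * d))"
proof -
  obtain P :: "real set" where "finite P" and "card P \<le> 2 ^ p"
    and P: "\<And>r l h S v a b. l < L \<Longrightarrow> h < H \<Longrightarrow> a < d \<Longrightarrow> b < d \<Longrightarrow>
      ll_upd M r l h S v a b \<in> P"
    using assms(2) unfolding ll_precision_def by auto
  let ?I = "checkpoint_index L H d n"
  have "n ^ n = card ({1..n} \<rightarrow>\<^sub>E {1..n::nat})"
    by (simp add: card_PiE)
  also have "\<dots> \<le> card (?I \<rightarrow>\<^sub>E P)"
  proof (rule card_inj_on_le[OF assms(3)])
    show "(\<lambda>f. ll_checkpoint L H d M (eva_tokens n f 1) n) ` ({1..n} \<rightarrow>\<^sub>E {1..n})
        \<subseteq> ?I \<rightarrow>\<^sub>E P"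
      using ll_checkpoint_in_PiE[OF assms(1) P] by blast
    show "finite (?I \<rightarrow>\<^sub>E P)"
      by (intro finite_PiE finite_checkpoint_index \<open>finite P\<close>)
  qed
  also have "\<dots> = card P ^ card ?I"
    by (simp add: card_PiE finite_checkpoint_index)
  also have "\<dots> \<le> (2 ^ p) ^ card ?I"
    using \<open>card P \<le> 2 ^ p\<close> by (rule power_mono) simp
  also have "\<dots> = 2 ^ (p * (L * H * nstates (n + 1) * d * d))"
    by (simp add: power_mult[symmetric] card_checkpoint_index)
  finally show ?thesis .
qed

lemma eva_checkpoint_inj:
  assumes answer: "\<And>f g x. is_fun n f \<Longrightarrow> is_fun n g \<Longrightarrow> x \<in> {1..n} \<Longrightarrow>
      ll_checkpoint L H d M (eva_tokens n f x) n = ll_checkpoint L H d M (eva_tokens n g x) n \<Longrightarrow> f x = g x"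
  shows "inj_on (\<lambda>f. ll_checkpoint L H d M (eva_tokens n f 1) n) ({1..n} \<rightarrow>\<^sub>E {1..n})"
proof (rule inj_onI)
  fix f g
  assume f: "f \<in> {1..n} \<rightarrow>\<^sub>E {1..n}" and g: "g \<in> {1..n} \<rightarrow>\<^sub>E {1..n}"
    and eq: "ll_checkpoint L H d M (eva_tokens n f 1) n = ll_checkpoint L H d M (eva_tokens n g 1) n"
  have query_irrelevant: "ll_checkpoint L H d M (eva_tokens n f' x) n = ll_checkpoint L H d M (eva_tokens n f' 1) n"
    for f' x by (rule ll_checkpoint_cong_prefix) (simp add: eva_tokens_def)
  have "is_fun n f" "is_fun n g"
    using f g unfolding is_fun_def by auto
  show "f = g"
  proof (rule PiE_ext[OF f g])
    fix x
    assume "x \<in> {1..n}"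
    moreover have "ll_checkpoint L H d M (eva_tokens n f x) n = ll_checkpoint L H d M (eva_tokens n g x) n"
      using eq query_irrelevant[of f x] query_irrelevant[of g x] by simp
    ultimately show "f x = g x"
      using answer \<open>is_fun n f\<close> \<open>is_fun n g\<close> by blast
  qed
qed

lemma ll_solves_checkpoint_inj:
  assumes "ll_solves n L H d p M" and "n \<ge> 1"
  shows "inj_on (\<lambda>f. ll_checkpoint L H d M (eva_tokens n f 1) n) ({1..n} \<rightarrow>\<^sub>E {1..n})"
proof (rule eva_checkpoint_inj)
  fix f g x
  assume "is_fun n f" "is_fun n g" "x \<in> {1..n}"
    and "ll_checkpoint L H d M (eva_tokens n f x) n = ll_checkpoint L H d M (eva_tokens n g x) n"
  then have "ll_stream H d M (eva_tokens n f x) L (n + 1) = ll_stream H d M (eva_tokens n g x) L (n + 1)"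
    using assms(2) by (intro ll_stream_eq_after_checkpoint) (auto simp: eva_tokens_def)
  moreover have "ll_run L H d M (eva_tokens n f x) (n + 1) = f x"
    and "ll_run L H d M (eva_tokens n g x) (n + 1) = g x"
    using assms(1) \<open>is_fun n f\<close> \<open>is_fun n g\<close> \<open>x \<in> {1..n}\<close> unfolding ll_solves_def by auto
  ultimately show "f x = g x"
    by (simp add: ll_run_def)
qed

lemma ll_solves_cot_checkpoint_inj:
  assumes "ll_solves_cot n L H d p M" and "n \<ge> 1"
  shows "inj_on (\<lambda>f. ll_checkpoint L H d M (eva_tokens n f 1) n) ({1..n} \<rightarrow>\<^sub>E {1..n})"
proof (rule eva_checkpoint_inj)
  obtain T dec
    where dec: "\<And>f x. is_fun n f \<Longrightarrow> x \<in> {1..n} \<Longrightarrow> dec (ll_cot_tokens L H d M n T f x) = f x"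
    using assms(1) unfolding ll_solves_cot_def by blast
  fix f g x
  assume "is_fun n f" "is_fun n g" "x \<in> {1..n}"
    and "ll_checkpoint L H d M (eva_tokens n f x) n = ll_checkpoint L H d M (eva_tokens n g x) n"
  then have "ll_cot_tokens L H d M n T f x = ll_cot_tokens L H d M n T g x"
    unfolding ll_cot_tokens_def using assms(2)
    by (intro map_cong refl ll_cot_eq_after_checkpoint) (auto simp: eva_tokens_def)
  then show "f x = g x"
    using dec[of f x] dec[of g x] \<open>is_fun n f\<close> \<open>is_fun n g\<close> \<open>x \<in> {1..n}\<close> by simp
qed

lemma two_pow_nstates_less_self_pow:
  fixes N n :: nat
  assumes "N \<ge> 1" and "8 * N < n"
  shows "2 ^ (N * nstates (n + 1)) < n ^ n"
proof -
  have "n \<ge> 8" using assms by simp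
  then have "log 2 (real n) \<ge> log 2 8" by simp
  moreover have "log 2 (8::real) = 3"
    using log2_of_power_eq[of 8 3] by simp
  ultimately have log_n: "log 2 (real n) \<ge> 3" by simp
  have "real (nstates (n + 1)) \<le> log 2 (real (n + 1)) + 3"
    unfolding nstates_def by (simp add: add.commute) linarith
  also have "\<dots> \<le> 8 * log 2 (real n)"
    using log2_Suc_le[of n] log_n \<open>n \<ge> 8\<close> by simp
  finally have K: "real (nstates (n + 1)) \<le> 8 * log 2 (real n)" .
  have "real N * real (nstates (n + 1)) < real n / 8 * real (nstates (n + 1))"
    using assms(2) by (intro mult_strict_right_mono) (simp_all add: nstates_def)
  also have "\<dots> \<le> real n / 8 * (8 * log 2 (real n))"
    using K by (intro mult_left_mono) simp_all
  finally have "real N * real (nstates (n + 1)) < real n * log 2 (real n)"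
    by simp
  then have "real (2 ^ (N * nstates (n + 1))) < 2 powr (log 2 (real n) * real n)"
    by (simp add: powr_realpow[symmetric] mult.commute)
  also have "\<dots> = real (n ^ n)"
    using \<open>n \<ge> 8\<close> by (simp add: powr_powr[symmetric] powr_realpow)
  finally show ?thesis by linarith
qed

lemma ll_lower_bound:
  assumes "L \<ge> 1" "H \<ge> 1" "d \<ge> 1" "p \<ge> 1" and "8 * (L * H * d\<^sup>2 * p) < n"
  shows "\<not> ll_solves n L H d p M \<and> \<not> ll_solves_cot n L H d p M"
proof -
  have "n \<ge> 1" using assms(5) by simp
  have not_inj: "\<not> inj_on (\<lambda>f. ll_checkpoint L H d M (eva_tokens n f 1) n) ({1..n} \<rightarrow>\<^sub>E {1..n})"
    if "ll_precision L H d p M"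
  proof
    assume "inj_on (\<lambda>f. ll_checkpoint L H d M (eva_tokens n f 1) n) ({1..n} \<rightarrow>\<^sub>E {1..n})"
    with \<open>n \<ge> 1\<close> that have "n ^ n \<le> 2 ^ (p * (L * H * nstates (n + 1) * d * d))"
      by (rule eva_count_le_checkpoints)
    also have "\<dots> = 2 ^ (L * H * d\<^sup>2 * p * nstates (n + 1))"
      by (simp add: power2_eq_square ac_simps)
    also have "\<dots> < n ^ n"
      using assms by (intro two_pow_nstates_less_self_pow) simp_all
    finally show False by simp
  qed
  show ?thesis
  proof (intro conjI notI)
    assume solves: "ll_solves n L H d p M"
    then have "ll_precision L H d p M"
      by (simp add: ll_solves_def)
    with not_inj ll_solves_checkpoint_inj[OF solves \<open>n \<ge> 1\<close>] show False
      by blast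
  next
    assume solves: "ll_solves_cot n L H d p M"
    then have "ll_precision L H d p M"
      by (simp add: ll_solves_cot_def)
    with not_inj ll_solves_cot_checkpoint_inj[OF solves \<open>n \<ge> 1\<close>] show False
      by blast
  qed
qed

section \<open>Rounding and concentration of softmax\<close>

lemma rnd_nearest:
  assumes "finite P" and "P \<noteq> {}"
  shows "rnd P t \<in> P" and "\<And>q. q \<in> P \<Longrightarrow> \<bar>t - rnd P t\<bar> \<le> \<bar>t - q\<bar>"
proof -
  obtain q0 where "is_arg_min (\<lambda>q. \<bar>t - q\<bar>) (\<lambda>q. q \<in> P) q0"
    using ex_is_arg_min_if_finite[OF assms] by blast
  then have "\<exists>q. q \<in> P \<and> (\<forall>q'\<in>P. \<bar>t - q\<bar> \<le> \<bar>t - q'\<bar>)"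
    unfolding is_arg_min_linorder by blast
  then have "rnd P t \<in> P \<and> (\<forall>q'\<in>P. \<bar>t - rnd P t\<bar> \<le> \<bar>t - q'\<bar>)"
    unfolding rnd_def by (rule someI_ex)
  then show "rnd P t \<in> P" and "\<And>q. q \<in> P \<Longrightarrow> \<bar>t - rnd P t\<bar> \<le> \<bar>t - q\<bar>"
    by blast+
qed

lemma rnd_of_int_eq:
  fixes S :: "int set"
  assumes "finite S" and "b \<in> S" and "\<bar>t - of_int b\<bar> < 1/2"
  shows "rnd (of_int ` S) t = of_int b"
proof -
  have nonempty: "of_int ` S \<noteq> ({} :: real set)"
    using assms(2) by blast
  have finite: "finite (of_int ` S :: real set)"
    using assms(1) by simp
  obtain a where a: "a \<in> S" "rnd (of_int ` S) t = of_int a"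
    using rnd_nearest(1)[OF finite nonempty] by blast
  have "\<bar>t - of_int a\<bar> \<le> \<bar>t - of_int b\<bar>"
    using rnd_nearest(2)[OF finite nonempty] assms(2) a(2) by (metis image_eqI)
  with assms(3) have "\<bar>of_int a - of_int b\<bar> < (1::real)"
    by linarith
  then have "a = b"
    by linarith
  with a show ?thesis
    by simp
qed

lemma softmax_average_close:
  fixes s v :: "nat \<Rightarrow> real"
  assumes "finite S" and "x \<in> S"
    and gap: "\<And>j. j \<in> S \<Longrightarrow> j \<noteq> x \<Longrightarrow> s j \<le> s x - \<beta>"
    and spread: "\<And>j. j \<in> S \<Longrightarrow> \<bar>v j - v x\<bar> \<le> W"
    and "real (card S) * W * exp (- \<beta>) < 1/2"
  shows "\<bar>(\<Sum>j\<in>S. exp (s j) / (\<Sum>i\<in>S. exp (s i)) * v j) - v x\<bar> < 1/2"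
proof -
  define Z where "Z = (\<Sum>i\<in>S. exp (s i))"
  have "exp (s x) \<le> Z"
    unfolding Z_def using assms(1,2) by (intro member_le_sum) auto
  then have "Z > 0"
    using exp_gt_zero less_le_trans by blast
  have "W \<ge> 0"
    using spread[OF assms(2)] by simp
  have weight: "\<bar>exp (s j) / Z * (v j - v x)\<bar> \<le> exp (- \<beta>) * W" if "j \<in> S" for j
  proof (cases "j = x")
    case False
    have "exp (s j) / Z \<le> exp (s j) / exp (s x)"
      using \<open>exp (s x) \<le> Z\<close> \<open>Z > 0\<close> by (intro divide_left_mono) auto
    also have "\<dots> \<le> exp (- \<beta>)"
      using gap[OF that False] by (simp add: exp_diff[symmetric])
    finally have "exp (s j) / Z * \<bar>v j - v x\<bar> \<le> exp (- \<beta>) * W"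
      using spread[OF that] \<open>W \<ge> 0\<close> by (intro mult_mono) auto
    then show ?thesis
      using \<open>Z > 0\<close> by (simp add: abs_mult)
  qed (use \<open>W \<ge> 0\<close> in simp)
  have "(\<Sum>j\<in>S. exp (s j) / Z * v j) - v x = (\<Sum>j\<in>S. exp (s j) / Z * (v j - v x))"
    using \<open>Z > 0\<close> unfolding Z_def
    by (simp add: right_diff_distrib sum_subtractf sum_distrib_right[symmetric] sum_divide_distrib[symmetric])
  also have "\<bar>\<dots>\<bar> \<le> (\<Sum>j\<in>S. exp (- \<beta>) * W)"
    using weight by (intro sum_abs[THEN order_trans] sum_mono) auto
  also have "\<dots> = real (card S) * W * exp (- \<beta>)"
    by simp
  finally show ?thesis
    using assms(5) unfolding Z_def by linarith
qed

section \<open>A one-layer full-attention transformer for Eva\<close>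

definition key_vec :: "nat \<Rightarrow> nat \<Rightarrow> vec" where
  "key_vec j y = (\<lambda>a. if a = 0 then real j else if a = 1 then real j ^ 2 else if a = 2 then real y else 0)"

definition query_vec :: "nat \<Rightarrow> vec" where
  "query_vec x = (\<lambda>a. if a = 0 then real x else if a = 3 then 1 else 0)"

definition eva_Q :: "real \<Rightarrow> mat" where
  "eva_Q \<beta> = (\<lambda>a c. if a = 0 \<and> c = 0 then 2 * \<beta> else if a = 1 \<and> c = 3 then - \<beta> else 0)"

definition eva_K :: "real \<Rightarrow> mat" where
  "eva_K G = (\<lambda>a c. if a = 0 \<and> c = 0 then 1 else if a = 1 \<and> c = 1 then 1 else if a = 1 \<and> c = 3 then G else 0)"

definition eva_V :: mat where
  "eva_V = (\<lambda>a c. if a = 0 \<and> c = 2 then 1 else 0)"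

lemma mvec_4: "mvec 4 A v a = (if a < 4 then A a 0 * v 0 + A a 1 * v 1 + A a 2 * v 2 + A a 3 * v 3 else 0)"
  unfolding mvec_def by (simp add: numeral_eq_Suc)

lemma sum_lessThan_4: "(\<Sum>a<(4::nat). g a) = g 0 + g 1 + g 2 + (g 3 :: real)"
  by (simp add: numeral_eq_Suc)

lemma eva_score_key:
  "(\<Sum>a<4. mvec 4 (eva_Q \<beta>) (query_vec x) a * mvec 4 (eva_K G) (key_vec j y) a)
     = \<beta> * (2 * real x * real j - real j ^ 2)"
  by (simp add: sum_lessThan_4 mvec_4 eva_Q_def eva_K_def query_vec_def key_vec_def algebra_simps)

lemma eva_score_query:
  "(\<Sum>a<4. mvec 4 (eva_Q \<beta>) (query_vec x) a * mvec 4 (eva_K G) (query_vec x) a)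
     = \<beta> * (2 * real x ^ 2 - G)"
  by (simp add: sum_lessThan_4 mvec_4 eva_Q_def eva_K_def query_vec_def algebra_simps power2_eq_square)

lemma eva_value_key: "mvec 4 eva_V (key_vec j y) 0 = real y"
  and eva_value_query: "mvec 4 eva_V (query_vec x) 0 = 0"
  by (simp_all add: mvec_4 eva_V_def key_vec_def query_vec_def)

definition eva_numbers :: "nat \<Rightarrow> real set" where
  "eva_numbers n = of_int ` {- (2 * (int n + 1) ^ 2) .. 4 * (int n + 1) ^ 2}"

lemma int_in_eva_range:
  assumes "m \<le> 4 * (n + 1) ^ 2"
  shows "int m \<in> {- (2 * (int n + 1) ^ 2) .. 4 * (int n + 1) ^ 2}"
proof -
  have "int m \<le> int (4 * (n + 1) ^ 2)"
    using assms by (simp only: of_nat_le_iff)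
  also have "\<dots> = 4 * (int n + 1) ^ 2"
    by simp
  finally show ?thesis
    unfolding atLeastAtMost_iff using zero_le_power2[of "int n + 1"] by linarith
qed

lemma of_nat_in_eva_numbers:
  assumes "m \<le> 4 * (n + 1) ^ 2"
  shows "real m \<in> eva_numbers n"
proof -
  have "of_int (int m) \<in> eva_numbers n"
    unfolding eva_numbers_def using int_in_eva_range[OF assms] by (rule imageI)
  then show ?thesis
    by simp
qed

lemma card_eva_numbers: "card (eva_numbers n) \<le> 8 * (n + 1) ^ 2"
proof -
  have "card (eva_numbers n) = card {- (2 * (int n + 1) ^ 2) .. 4 * (int n + 1) ^ 2}"
    unfolding eva_numbers_def by (rule card_image) (simp add: inj_on_def)
  also have "\<dots> = nat (6 * (int n + 1) ^ 2 + 1)"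
    by simp
  also have "\<dots> \<le> 8 * (n + 1) ^ 2"
    by (simp add: nat_le_iff power2_eq_square algebra_simps)
  finally show ?thesis .
qed

lemma eva_score_gap:
  fixes s :: "nat \<Rightarrow> real"
  assumes "n \<ge> 1" and "x \<in> {1..n}" and "\<beta> \<ge> 0"
    and key: "\<And>j. j \<in> {1..n} \<Longrightarrow> s j = \<beta> * (real x ^ 2 - (real x - real j) ^ 2)"
    and query: "s (n + 1) = \<beta> * (real x ^ 2 - (2 * real n ^ 2 - real x ^ 2))"
    and "j \<in> {1..n + 1}" and "j \<noteq> x"
  shows "s j \<le> s x - \<beta>"
proof (cases "j = n + 1")
  case True
  have "real x ^ 2 \<le> real n ^ 2" and "1 \<le> real n ^ 2"
    using assms(1,2) by (simp_all add: power_mono)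
  then have "1 \<le> 2 * real n ^ 2 - real x ^ 2"
    by linarith
  then have "\<beta> * 1 \<le> \<beta> * (2 * real n ^ 2 - real x ^ 2)"
    using assms(3) by (intro mult_left_mono) auto
  then show ?thesis
    using True key[OF assms(2)] query by (simp add: algebra_simps)
next
  case False
  then have "j \<in> {1..n}"
    using assms(6) by auto
  have "1 \<le> \<bar>real x - real j\<bar>"
    using assms(7) by (cases "x < j") auto
  then have "1 \<le> (real x - real j) ^ 2"
    by (metis one_le_power power2_abs)
  then have "\<beta> * 1 \<le> \<beta> * (real x - real j) ^ 2"
    using assms(3) by (intro mult_left_mono) auto
  then show ?thesis
    using key[OF \<open>j \<in> {1..n}\<close>] key[OF assms(2)] by (simp add: algebra_simps)
qed

lemma softmax_leakage_small: "real (card {1..n + 1}) * real n * exp (- (2 * (real n + 1) ^ 2)) < 1/2"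
proof -
  have "2 * ((real n + 1) * real n) < 1 + 2 * (real n + 1) ^ 2"
    by (simp add: power2_eq_square algebra_simps)
  also have "\<dots> \<le> exp (2 * (real n + 1) ^ 2)"
    by (rule exp_ge_add_one_self)
  finally have "(real n + 1) * real n * exp (- (2 * (real n + 1) ^ 2))
      < exp (2 * (real n + 1) ^ 2) / 2 * exp (- (2 * (real n + 1) ^ 2))"
    by (intro mult_strict_right_mono) auto
  then show ?thesis
    by (simp add: exp_minus add.commute)
qed

lemma eva_head_picks_value:
  assumes "n \<ge> 1" and "is_fun n f" and "x \<in> {1..n}"
    and keys: "\<And>j. j \<in> {1..n} \<Longrightarrow> xs j = key_vec j (f j)" and query: "xs (n + 1) = query_vec x"
  shows "fa_head (eva_numbers n) 4 (eva_Q (2 * (real n + 1) ^ 2)) (eva_K (2 * real n ^ 2)) eva_V xs (n + 1) 0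
    = real (f x)"
proof -
  define \<beta> where "\<beta> = 2 * (real n + 1) ^ 2"
  define s where "s j = (\<Sum>a<4. mvec 4 (eva_Q \<beta>) (xs (n + 1)) a * mvec 4 (eva_K (2 * real n ^ 2)) (xs j) a)" for j
  define v where "v j = mvec 4 eva_V (xs j) 0" for j
  define t where "t = (\<Sum>j\<in>{1..n + 1}. exp (s j) / (\<Sum>i\<in>{1..n + 1}. exp (s i)) * v j)"
  have f: "f j \<in> {1..n}" if "j \<in> {1..n}" for j
    using assms(2) that unfolding is_fun_def by blast
  have s_key: "s j = \<beta> * (real x ^ 2 - (real x - real j) ^ 2)" if "j \<in> {1..n}" for j
    unfolding s_def query keys[OF that] eva_score_key by (simp add: power2_eq_square algebra_simps)
  have s_query: "s (n + 1) = \<beta> * (real x ^ 2 - (2 * real n ^ 2 - real x ^ 2))"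
    unfolding s_def query eva_score_query by (simp add: algebra_simps)
  have "\<beta> \<ge> 0"
    by (simp add: \<beta>_def)
  note gap = eva_score_gap[OF assms(1,3) this s_key s_query]
  have spread: "\<bar>v j - v x\<bar> \<le> real n" if "j \<in> {1..n + 1}" for j
    using that f[OF assms(3)] f[of j] assms(3)
    by (cases "j = n + 1") (auto simp: v_def keys query[simplified] eva_value_key eva_value_query)
  have "\<bar>t - v x\<bar> < 1/2"
    unfolding t_def using assms(3) gap spread softmax_leakage_small[of n, folded \<beta>_def]
    by (intro softmax_average_close) auto
  moreover have "f x \<le> 4 * (n + 1) ^ 2"
    using f[OF assms(3)] le_square[of "n + 1"] by (simp add: power2_eq_square)
  ultimately have "rnd (eva_numbers n) t = of_int (int (f x))"
    unfolding eva_numbers_def using assms(3)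
    by (intro rnd_of_int_eq int_in_eva_range) (simp_all add: v_def keys eva_value_key)
  then show ?thesis
    unfolding fa_head_def Let_def t_def s_def v_def \<beta>_def by simp
qed

definition token_clip :: "nat \<Rightarrow> nat \<Rightarrow> nat" where
  "token_clip n t = (if t \<le> n then t else 0)"

definition eva_embedding :: "nat \<Rightarrow> nat \<Rightarrow> nat \<Rightarrow> strm" where
  "eva_embedding n t i = (\<lambda>h. if i \<in> {1..n} then key_vec i (token_clip n t) else query_vec (token_clip n t))"

(* The test on Y 0 0 keeps the MLP output representable for every input, as fa_precision
   demands; token_clip does the same for the embedding. *)
definition eva_transformer :: "nat \<Rightarrow> fullatt_model" where
  "eva_transformer n =
    \<lparr>fa_emb = eva_embedding n,
     fa_Q = (\<lambda>l h. eva_Q (2 * (real n + 1) ^ 2)),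
     fa_K = (\<lambda>l h. eva_K (2 * real n ^ 2)),
     fa_V = (\<lambda>l h. eva_V),
     fa_mlp = (\<lambda>l Y X h a. if h = 0 \<and> a = 0 \<and> Y 0 0 \<in> eva_numbers n then Y 0 0 else 0),
     fa_out = (\<lambda>X. nat \<lfloor>X 0 0\<rfloor>)\<rparr>"

lemma eva_transformer_run:
  assumes "n \<ge> 1" and "is_fun n f" and "x \<in> {1..n}"
  shows "fa_run (eva_numbers n) 1 1 4 (eva_transformer n) (eva_tokens n f x) (n + 1) = f x"
proof -
  let ?X = "fa_stream (eva_numbers n) 1 4 (eva_transformer n) (eva_tokens n f x) 0"
  have f: "f j \<in> {1..n}" if "j \<in> {1..n}" for j
    using assms(2) that unfolding is_fun_def by blast
  have "?X j 0 = key_vec j (f j)" if "j \<in> {1..n}" for j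
    using that f[OF that]
    by (auto simp: eva_transformer_def eva_embedding_def smask_def eva_tokens_def token_clip_def key_vec_def)
  moreover have "?X (n + 1) 0 = query_vec x"
    using assms(3)
    by (auto simp: eva_transformer_def eva_embedding_def smask_def eva_tokens_def token_clip_def query_vec_def)
  ultimately have "fa_head (eva_numbers n) 4 (eva_Q (2 * (real n + 1) ^ 2)) (eva_K (2 * real n ^ 2)) eva_V
      (\<lambda>j. ?X j 0) (n + 1) 0 = real (f x)"
    using assms by (intro eva_head_picks_value) auto
  moreover have "real (f x) \<in> eva_numbers n"
    using f[OF assms(3)] by (intro of_nat_in_eva_numbers) (simp add: power2_eq_square)
  ultimately show ?thesis
    by (simp add: fa_run_def eva_transformer_def smask_def Let_def)
qed

lemma eva_transformer_precision:
  assumes "card (eva_numbers n) \<le> 2 ^ p"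
  shows "fa_precision (eva_numbers n) 1 1 4 p (eva_transformer n)"
proof -
  have small: "real m \<in> eva_numbers n" if "m \<le> n + 1" for m
    using that le_square[of "n + 1"] by (intro of_nat_in_eva_numbers) (simp add: power2_eq_square)
  have square: "real i ^ 2 \<in> eva_numbers n" if "i \<le> n" for i
  proof -
    have "i ^ 2 \<le> (n + 1) ^ 2"
      using that by (intro power_mono) simp_all
    then have "i ^ 2 \<le> 4 * (n + 1) ^ 2"
      by linarith
    then show ?thesis
      unfolding of_nat_power[symmetric] by (rule of_nat_in_eva_numbers)
  qed
  have "n ^ 2 \<le> (n + 1) ^ 2"
    by (intro power_mono) simp_all
  then have "2 * n ^ 2 \<le> 4 * (n + 1) ^ 2"
    by linarith
  from of_nat_in_eva_numbers[OF this] of_nat_in_eva_numbers[of "4 * (n + 1) ^ 2" n, OF order_refl]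
  have key: "2 * real n ^ 2 \<in> eva_numbers n" and query: "2 * (2 * (real n + 1) ^ 2) \<in> eva_numbers n"
    by (simp_all add: add.commute)
  have "of_int (- (2 * (int n + 1) ^ 2)) \<in> eva_numbers n"
    unfolding eva_numbers_def by (intro imageI) simp
  then have neg_query: "- (2 * (real n + 1) ^ 2) \<in> eva_numbers n"
    by simp
  have zero: "0 \<in> eva_numbers n" and one: "1 \<in> eva_numbers n"
    using small[of 0] small[of 1] by simp_all
  have "real (token_clip n t) \<in> eva_numbers n" for t
    using small by (simp add: token_clip_def)
  then have "eva_embedding n t i h a \<in> eva_numbers n" for t i h a
    using zero one small square by (auto simp: eva_embedding_def key_vec_def query_vec_def)
  moreover have "finite (eva_numbers n)"
    by (simp add: eva_numbers_def)
  ultimately show ?thesis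
    using assms zero one key query neg_query
    by (auto simp: fa_precision_def eva_transformer_def eva_Q_def eva_K_def eva_V_def)
qed

lemma eva_full_attention_upper_bound:
  "\<exists>C k N. \<forall>n \<ge> N. \<exists>H d p P M. fa_solves n 1 H d p P M \<and> real (H * d * p) \<le> C * (log 2 (real n)) ^ k"
proof (rule exI[of _ "36 :: real"], rule exI[of _ "1 :: nat"], rule exI[of _ "2 :: nat"], intro allI impI)
  fix n :: nat
  assume "n \<ge> 2"
  define q where "q = ceillog2 (n + 1)"
  have "(n + 1) ^ 2 \<le> (2 ^ q) ^ 2"
    unfolding q_def by (intro power_mono le_two_power_ceillog2) simp
  then have "card (eva_numbers n) \<le> 2 ^ (2 * q + 3)"
    using card_eva_numbers[of n] by (simp add: power_add power_mult[symmetric] mult.commute)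
  then have "fa_solves n 1 1 4 (2 * q + 3) (eva_numbers n) (eva_transformer n)"
    using eva_transformer_precision eva_transformer_run \<open>n \<ge> 2\<close> by (simp add: fa_solves_def)
  moreover have "real (1 * 4 * (2 * q + 3)) \<le> 36 * log 2 (real n) ^ 1"
  proof -
    have "real q < log 2 (real (n + 1)) + 1"
      unfolding q_def by (rule ceillog2_less_log) simp
    moreover have "log 2 (real (n + 1)) \<le> log 2 (real n) + 1"
      using log2_Suc_le[of n] \<open>n \<ge> 2\<close> by simp
    moreover have "log 2 (real n) \<ge> 1"
      using \<open>n \<ge> 2\<close> by simp
    ultimately show ?thesis
      by simp
  qed
  ultimately show "\<exists>H d p P M. fa_solves n 1 H d p P M \<and> real (H * d * p) \<le> 36 * log 2 (real n) ^ 1"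
    by blast
qed

theorem theoremA5:
  shows "(\<exists>c > 0. \<forall>n L H d p.
            L \<ge> 1 \<and> H \<ge> 1 \<and> d \<ge> 1 \<and> p \<ge> 1 \<and> real (L * H * d\<^sup>2 * p) < c * real n \<longrightarrow>
              (\<forall>M. \<not> ll_solves n L H d p M) \<and> (\<forall>M. \<not> ll_solves_cot n L H d p M))
       \<and> (\<exists>C k N. \<forall>n \<ge> N. \<exists>H d p P M.
            fa_solves n 1 H d p P M \<and> real (H * d * p) \<le> C * (log 2 (real n)) ^ k)"
proof
  have lower: "(\<forall>M. \<not> ll_solves n L H d p M) \<and> (\<forall>M. \<not> ll_solves_cot n L H d p M)"
    if size: "L \<ge> 1 \<and> H \<ge> 1 \<and> d \<ge> 1 \<and> p \<ge> 1 \<and> real (L * H * d\<^sup>2 * p) < 1/8 * real n"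
    for n L H d p :: nat
  proof -
    from size have "real (8 * (L * H * d\<^sup>2 * p)) < real n"
      by (simp only: of_nat_mult of_nat_numeral) linarith
    then have "8 * (L * H * d\<^sup>2 * p) < n"
      by (simp only: of_nat_less_iff)
    with size show ?thesis
      using ll_lower_bound by blast
  qed
  show "\<exists>c > 0. \<forall>n L H d p.
            L \<ge> 1 \<and> H \<ge> 1 \<and> d \<ge> 1 \<and> p \<ge> 1 \<and> real (L * H * d\<^sup>2 * p) < c * real n \<longrightarrow>
              (\<forall>M. \<not> ll_solves n L H d p M) \<and> (\<forall>M. \<not> ll_solves_cot n L H d p M)"
    using lower by (intro exI[of _ "1/8"] conjI) auto
next
  show "\<exists>C k N. \<forall>n \<ge> N. \<exists>H d p P M.
            fa_solves n 1 H d p P M \<and> real (H * d * p) \<le> C * (log 2 (real n)) ^ k"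
    by (rule eva_full_attention_upper_bound)
qed

end
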